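(* In a $\$$-bounded contract, for all $\mathcal{A}\subseteq\mathbb{A}$, all mempools $\mathcal{P}\subseteq\mathbb{X}$ and all (reachable) states $s$, $\mathrm{MEV}_{\mathcal{A}}(s,\mathcal{P})$ is defined and non-negative.
   Context: Fix a countably infinite set $\mathbb{A}$ of actors, a set $\mathbb{T}$ of token types and a set $\mathbb{X}$ of transactions. A wallet is a function $\mathbb{T}\to\mathbb{N}$; $\mathbb{W}_{\mathrm{fin}}$ is the set of finite-support wallets. A wallet state is $W:\mathbb{A}\to(\mathbb{T}\to\mathbb{N})$ satisfying the finite tokens axiom $\sum_{\tau}\sum_{a\in\mathbb{A}}W(a)(\tau)\in\mathbb{N}$. A contract consists of blockchain states $\mathbb{S}=\mathbb{C}\times\mathbb{W}$ (contract state, wallet state), a partial transition function $\mapsto:(\mathbb{S}\times\mathbb{X})\rightharpoonup\mathbb{S}$ and initial states $\mathbb{S}_0$. A transaction $x$ is valid in $s$ if $s\xmapsto{x}s'$ for some $s'$. For finite sequences, $s\xrightarrow{\varepsilon}s$, and $s\xrightarrow{\vec{Y}x}s'$ iff either $s\xrightarrow{\vec{Y}}s''\xmapsto{x}s'$, or $s\xrightarrow{\vec{Y}}s'$ and $x$ is not valid in $s'$. $s$ is reachable if $s_0\xrightarrow{\vec X}s$ for some $s_0\in\mathbb{S}_0$ and some $\vec X$. $W_{\mathcal{A}}(s)=\sum_{a\in\mathcal{A}}W(s)(a)$. A wealth function is an additive map $\$:\mathbb{W}_{\mathrm{fin}}\to\mathbb{N}$; $\$_{\mathcal{A}}(s)=\$(W_{\mathcal{A}}(s))$;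 the gain is $G_{\mathcal{A}}(s,\vec{X})=\$_{\mathcal{A}}(s')-\$_{\mathcal{A}}(s)$ where $s\xrightarrow{\vec X}s'$. The contract is $\$$-bounded if for every $s_0\in\mathbb{S}_0$ there is $n$ such that $\$_{\mathbb{A}}(s)<n$ for all $s$ reachable from $s_0$. A transaction deducibility function $\kappa:\mathcal{P}(\mathbb{A})\times\mathcal{P}(\mathbb{X})\to\mathcal{P}(\mathbb{X})$, $(\mathcal{A},\mathcal{X})\mapsto\kappa_{\mathcal{A}}(\mathcal{X})$, satisfies: extensivity $\mathcal{X}\subseteq\kappa_{\mathcal{A}}(\mathcal{X})$; idempotence $\kappa_{\mathcal{A}}(\kappa_{\mathcal{A}}(\mathcal{X}))=\kappa_{\mathcal{A}}(\mathcal{X})$; monotonicity in both arguments; continuity $\kappa_{\mathcal{A}}(\bigcup_i\mathcal{X}_i)=\bigcup_i\kappa_{\mathcal{A}}(\mathcal{X}_i)$ for increasing chains; finite causes (every finite $\mathcal{X}_0$ is contained in $\kappa_{\mathcal{A}_0}(\emptyset)$ for some finite $\mathcal{A}_0$); private knowledge ($\kappa_{\mathcal{A}}(\emptyset)\subseteq\kappa_{\mathcal{A}'}(\emptyset)$ implies $\mathcal{A}\subseteq\mathcal{A}'$); no shared secrets ($\kappa_{\mathcal{A}}(\mathcal{X})\cap\kappa_{\mathcal{B}}(\mathcal{X})\subseteq\kappa_{\mathcal{A}\cap\mathcal{B}}(\mathcal{X})$). $\mathcal{X}^*$ denotes the finite sequences over $\mathcal{X}$. The unrealized gain is $\mathrm{uG}_{\mathcal{A}}(s)=\max\{G_{\mathcal{A}}(s,\vec{Y}):\vec{Y}\in\kappa_{\mathcal{A}}(\emptyset)^*\}$;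 the external gain is $\mathrm{xG}_{\mathcal{A}}(s,\vec{Y})=G_{\mathcal{A}}(s,\vec{Y})-\mathrm{uG}_{\mathcal{A}}(s)$. The MEV extracted by $\mathcal{A}$ from a mempool $\mathcal{P}\subseteq\mathbb{X}$ in $s$ is $\mathrm{MEV}_{\mathcal{A}}(s,\mathcal{P})=\max\{\mathrm{xG}_{\mathcal{A}}(s,\vec{Y}):\vec{Y}\in\kappa_{\mathcal{A}}(\mathcal{P})^*\}$. *)

theory Defs
  imports "HOL-Library.Countable"
begin

(* Blockchain states: 'c = contract state, wallet state 'a => 't => nat.
   Transition function: partial, modelled with option. *)

type_synonym ('c,'a,'t) bstate = "'c \<times> ('a \<Rightarrow> 't \<Rightarrow> nat)"
type_synonym ('c,'a,'t,'x) trans_fun = "('c,'a,'t) bstate \<Rightarrow> 'x \<Rightarrow> ('c,'a,'t) bstate option"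

definition fin_wallet :: "('t \<Rightarrow> nat) \<Rightarrow> bool" where
  "fin_wallet w \<longleftrightarrow> finite {t. w t \<noteq> 0}"

definition wallet_state :: "('a \<Rightarrow> 't \<Rightarrow> nat) \<Rightarrow> bool" where
  "wallet_state W \<longleftrightarrow> finite {(a, t). W a t \<noteq> 0}"

definition contract :: "('c,'a,'t,'x) trans_fun \<Rightarrow> ('c,'a,'t) bstate set \<Rightarrow> bool" where
  "contract tr S0 \<longleftrightarrow> (\<forall>s0\<in>S0. wallet_state (snd s0)) \<and>
     (\<forall>s x s'. wallet_state (snd s) \<longrightarrow> tr s x = Some s' \<longrightarrow> wallet_state (snd s'))"

definition valid :: "('c,'a,'t,'x) trans_fun \<Rightarrow> ('c,'a,'t) bstate \<Rightarrow> 'x \<Rightarrow> bool" where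
  "valid tr s x \<longleftrightarrow> (\<exists>s'. tr s x = Some s')"

definition step :: "('c,'a,'t,'x) trans_fun \<Rightarrow> ('c,'a,'t) bstate \<Rightarrow> 'x \<Rightarrow> ('c,'a,'t) bstate" where
  "step tr s x = (case tr s x of Some s' \<Rightarrow> s' | None \<Rightarrow> s)"

definition exec :: "('c,'a,'t,'x) trans_fun \<Rightarrow> ('c,'a,'t) bstate \<Rightarrow> 'x list \<Rightarrow> ('c,'a,'t) bstate" where
  "exec tr s Xs = foldl (step tr) s Xs"

definition reachable_from :: "('c,'a,'t,'x) trans_fun \<Rightarrow> ('c,'a,'t) bstate \<Rightarrow> ('c,'a,'t) bstate \<Rightarrow> bool" where
  "reachable_from tr s0 s \<longleftrightarrow> (\<exists>Xs. exec tr s0 Xs = s)"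

definition reachable :: "('c,'a,'t,'x) trans_fun \<Rightarrow> ('c,'a,'t) bstate set \<Rightarrow> ('c,'a,'t) bstate \<Rightarrow> bool" where
  "reachable tr S0 s \<longleftrightarrow> (\<exists>s0\<in>S0. reachable_from tr s0 s)"

definition WA :: "'a set \<Rightarrow> ('c,'a,'t) bstate \<Rightarrow> ('t \<Rightarrow> nat)" where
  "WA A s = (\<lambda>t. \<Sum>a\<in>{a\<in>A. snd s a t \<noteq> 0}. snd s a t)"

definition wealth_fun :: "(('t \<Rightarrow> nat) \<Rightarrow> nat) \<Rightarrow> bool" where
  "wealth_fun d \<longleftrightarrow> (\<forall>w w'. fin_wallet w \<longrightarrow> fin_wallet w' \<longrightarrow>
      d (\<lambda>t. w t + w' t) = d w + d w')"

definition wealthA :: "(('t \<Rightarrow> nat) \<Rightarrow> nat) \<Rightarrow> 'a set \<Rightarrow> ('c,'a,'t) bstate \<Rightarrow> nat" where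
  "wealthA d A s = d (WA A s)"

definition gain :: "(('t \<Rightarrow> nat) \<Rightarrow> nat) \<Rightarrow> ('c,'a,'t,'x) trans_fun \<Rightarrow> 'a set
      \<Rightarrow> ('c,'a,'t) bstate \<Rightarrow> 'x list \<Rightarrow> int" where
  "gain d tr A s Xs = int (wealthA d A (exec tr s Xs)) - int (wealthA d A s)"

definition bounded :: "(('t \<Rightarrow> nat) \<Rightarrow> nat) \<Rightarrow> ('c,'a,'t,'x) trans_fun \<Rightarrow> ('c,'a,'t) bstate set \<Rightarrow> bool" where
  "bounded d tr S0 \<longleftrightarrow> (\<forall>s0\<in>S0. \<exists>n. \<forall>s. reachable_from tr s0 s \<longrightarrow> wealthA d UNIV s < n)"

definition deducibility :: "('a set \<Rightarrow> 'x set \<Rightarrow> 'x set) \<Rightarrow> bool" where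
  "deducibility \<kappa> \<longleftrightarrow>
     (\<forall>A X. X \<subseteq> \<kappa> A X) \<and>
     (\<forall>A X. \<kappa> A (\<kappa> A X) = \<kappa> A X) \<and>
     (\<forall>A A' X X'. A \<subseteq> A' \<longrightarrow> X \<subseteq> X' \<longrightarrow> \<kappa> A X \<subseteq> \<kappa> A' X') \<and>
     (\<forall>A (Xc :: nat \<Rightarrow> 'x set). (\<forall>i. Xc i \<subseteq> Xc (Suc i)) \<longrightarrow>
         \<kappa> A (\<Union>i. Xc i) = (\<Union>i. \<kappa> A (Xc i))) \<and>
     (\<forall>X0. finite X0 \<longrightarrow> (\<exists>A0. finite A0 \<and> X0 \<subseteq> \<kappa> A0 {})) \<and>
     (\<forall>A A'. \<kappa> A {} \<subseteq> \<kappa> A' {} \<longrightarrow> A \<subseteq> A') \<and>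
     (\<forall>A B X. \<kappa> A X \<inter> \<kappa> B X \<subseteq> \<kappa> (A \<inter> B) X)"

definition is_greatest :: "int set \<Rightarrow> int \<Rightarrow> bool" where
  "is_greatest S m \<longleftrightarrow> m \<in> S \<and> (\<forall>x\<in>S. x \<le> m)"

definition uG_set :: "('a set \<Rightarrow> 'x set \<Rightarrow> 'x set) \<Rightarrow> (('t \<Rightarrow> nat) \<Rightarrow> nat) \<Rightarrow> ('c,'a,'t,'x) trans_fun
      \<Rightarrow> 'a set \<Rightarrow> ('c,'a,'t) bstate \<Rightarrow> int set" where
  "uG_set \<kappa> d tr A s = {gain d tr A s Ys | Ys. set Ys \<subseteq> \<kappa> A {}}"

definition uG :: "('a set \<Rightarrow> 'x set \<Rightarrow> 'x set) \<Rightarrow> (('t \<Rightarrow> nat) \<Rightarrow> nat) \<Rightarrow> ('c,'a,'t,'x) trans_fun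
      \<Rightarrow> 'a set \<Rightarrow> ('c,'a,'t) bstate \<Rightarrow> int" where
  "uG \<kappa> d tr A s = (GREATEST g. g \<in> uG_set \<kappa> d tr A s)"

definition xG :: "('a set \<Rightarrow> 'x set \<Rightarrow> 'x set) \<Rightarrow> (('t \<Rightarrow> nat) \<Rightarrow> nat) \<Rightarrow> ('c,'a,'t,'x) trans_fun
      \<Rightarrow> 'a set \<Rightarrow> ('c,'a,'t) bstate \<Rightarrow> 'x list \<Rightarrow> int" where
  "xG \<kappa> d tr A s Ys = gain d tr A s Ys - uG \<kappa> d tr A s"

definition MEV_set :: "('a set \<Rightarrow> 'x set \<Rightarrow> 'x set) \<Rightarrow> (('t \<Rightarrow> nat) \<Rightarrow> nat) \<Rightarrow> ('c,'a,'t,'x) trans_fun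
      \<Rightarrow> 'a set \<Rightarrow> ('c,'a,'t) bstate \<Rightarrow> 'x set \<Rightarrow> int set" where
  "MEV_set \<kappa> d tr A s P = {xG \<kappa> d tr A s Ys | Ys. set Ys \<subseteq> \<kappa> A P}"

definition MEV :: "('a set \<Rightarrow> 'x set \<Rightarrow> 'x set) \<Rightarrow> (('t \<Rightarrow> nat) \<Rightarrow> nat) \<Rightarrow> ('c,'a,'t,'x) trans_fun
      \<Rightarrow> 'a set \<Rightarrow> ('c,'a,'t) bstate \<Rightarrow> 'x set \<Rightarrow> int" where
  "MEV \<kappa> d tr A s P = (GREATEST g. g \<in> MEV_set \<kappa> d tr A s P)"

end

theory Submission
  imports Defs
begin

text \<open>Every state reachable from a reachable state is itself reachable, so boundedness caps
  the total wealth, and hence the gain of \<open>A\<close>, along every continuation: the gains form a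
  nonempty set of integers bounded above and have a maximum. The external gain is the gain
  shifted by that maximum, so its values are bounded as well; and since \<open>\<kappa>\<^sub>A(\<emptyset>) \<subseteq> \<kappa>\<^sub>A(P)\<close>,
  a sequence realising the unrealised gain is admissible in the MEV maximum and has external
  gain 0, which makes the MEV non-negative.\<close>

lemma is_greatest_Greatest_if_bdd_above:
  fixes S :: "int set"
  assumes "x0 \<in> S" and "\<And>x. x \<in> S \<Longrightarrow> x \<le> b"
  shows "is_greatest S (GREATEST x. x \<in> S)"
proof -
  let ?T = "{x \<in> S. x0 \<le> x}"
  have fin: "finite ?T" by (rule finite_subset[of _ "{x0..b}"]) (use assms in auto)
  have x0: "x0 \<in> ?T" using assms(1) by simp
  have "Max ?T \<in> S" using Max_in[OF fin] x0 by blast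
  moreover have "x \<le> Max ?T" if "x \<in> S" for x
  proof (cases "x0 \<le> x")
    case True
    with that show ?thesis by (intro Max_ge[OF fin]) simp
  next
    case False
    with Max_ge[OF fin x0] show ?thesis by simp
  qed
  ultimately have "(GREATEST x. x \<in> S) = Max ?T" by (rule Greatest_equality)
  with \<open>Max ?T \<in> S\<close> \<open>\<And>x. x \<in> S \<Longrightarrow> x \<le> Max ?T\<close> show ?thesis
    unfolding is_greatest_def by simp
qed

lemma deducibility_mono:
  assumes "deducibility \<kappa>" and "A \<subseteq> A'" and "X \<subseteq> X'"
  shows "\<kappa> A X \<subseteq> \<kappa> A' X'"
proof -
  have "\<forall>A A' X X'. A \<subseteq> A' \<longrightarrow> X \<subseteq> X' \<longrightarrow> \<kappa> A X \<subseteq> \<kappa> A' X'"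
    using assms(1) unfolding deducibility_def by (elim conjE)
  with assms(2,3) show ?thesis by blast
qed

lemma exec_append: "exec tr s (Xs @ Ys) = exec tr (exec tr s Xs) Ys"
  unfolding exec_def by simp

lemma reachable_from_exec:
  assumes "reachable_from tr s0 s"
  shows "reachable_from tr s0 (exec tr s Ys)"
proof -
  obtain Xs where "exec tr s0 Xs = s" using assms unfolding reachable_from_def by blast
  then have "exec tr s0 (Xs @ Ys) = exec tr s Ys" by (simp add: exec_append)
  then show ?thesis unfolding reachable_from_def by blast
qed

lemma wallet_state_initial:
  assumes "contract tr S0" and "s0 \<in> S0"
  shows "wallet_state (snd s0)"
proof -
  have "\<forall>s0\<in>S0. wallet_state (snd s0)" using assms(1) unfolding contract_def by (rule conjunct1)
  then show ?thesis using assms(2) by blast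
qed

lemma wallet_state_step:
  assumes "contract tr S0" and "wallet_state (snd s)"
  shows "wallet_state (snd (step tr s x))"
proof (cases "tr s x")
  case None
  with assms(2) show ?thesis by (simp add: step_def)
next
  case (Some s')
  with assms have "wallet_state (snd s')" unfolding contract_def by (elim conjE allE impE)
  with Some show ?thesis by (simp add: step_def)
qed

lemma wallet_state_exec:
  assumes "contract tr S0" and "wallet_state (snd s)"
  shows "wallet_state (snd (exec tr s Xs))"
  using assms(2) unfolding exec_def
  by (induction Xs arbitrary: s) (simp_all add: wallet_state_step[OF assms(1)])

lemma wallet_state_if_reachable:
  assumes "contract tr S0" and "reachable tr S0 s"
  shows "wallet_state (snd s)"
proof -
  obtain s0 Xs where "s0 \<in> S0" and "exec tr s0 Xs = s"
    using assms(2) unfolding reachable_def reachable_from_def by blast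
  then show ?thesis using wallet_state_exec[OF assms(1) wallet_state_initial[OF assms(1)]] by blast
qed

lemma wallet_state_finite_holders:
  assumes "wallet_state W"
  shows "finite {a. W a t \<noteq> 0}"
proof -
  have "{a. W a t \<noteq> 0} \<subseteq> fst ` {(a, t). W a t \<noteq> 0}" by force
  then show ?thesis
    using assms unfolding wallet_state_def by (blast intro: finite_subset finite_imageI)
qed

lemma fin_wallet_WA:
  assumes "wallet_state W"
  shows "fin_wallet (WA A (c, W))"
proof -
  have "{t. WA A (c, W) t \<noteq> 0} \<subseteq> snd ` {(a, t). W a t \<noteq> 0}"
  proof
    fix t assume "t \<in> {t. WA A (c, W) t \<noteq> 0}"
    then have "(\<Sum>a\<in>{a \<in> A. W a t \<noteq> 0}. W a t) \<noteq> 0" unfolding WA_def by simp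
    then have "\<exists>a. W a t \<noteq> 0" by (cases "\<exists>a. W a t \<noteq> 0") simp_all
    then obtain a where "W a t \<noteq> 0" ..
    then have "(a, t) \<in> {(a, t). W a t \<noteq> 0}" by simp
    then show "t \<in> snd ` {(a, t). W a t \<noteq> 0}" by (rule rev_image_eqI) simp
  qed
  then show ?thesis
    using assms unfolding fin_wallet_def wallet_state_def by (blast intro: finite_subset finite_imageI)
qed

lemma WA_UNIV_eq_add_Compl:
  assumes "wallet_state W"
  shows "WA UNIV (c, W) = (\<lambda>t. WA A (c, W) t + WA (- A) (c, W) t)"
proof
  fix t
  have fin: "finite {a. W a t \<noteq> 0}" using assms by (rule wallet_state_finite_holders)
  have "{a \<in> UNIV. W a t \<noteq> 0} = {a \<in> A. W a t \<noteq> 0} \<union> {a \<in> - A. W a t \<noteq> 0}" by blast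
  then show "WA UNIV (c, W) t = WA A (c, W) t + WA (- A) (c, W) t"
    unfolding WA_def snd_conv
    by (simp add: sum.union_disjoint finite_subset[OF _ fin] disjoint_iff)
qed

lemma wealth_fun_add:
  "wealth_fun d \<Longrightarrow> fin_wallet w \<Longrightarrow> fin_wallet w' \<Longrightarrow> d (\<lambda>t. w t + w' t) = d w + d w'"
  unfolding wealth_fun_def by blast

lemma wealthA_le_wealthA_UNIV:
  assumes "wealth_fun d" and "wallet_state (snd s)"
  shows "wealthA d A s \<le> wealthA d UNIV s"
proof -
  obtain c W where s: "s = (c, W)" by (cases s)
  with assms(2) have W: "wallet_state W" by simp
  have "d (\<lambda>t. WA A (c, W) t + WA (- A) (c, W) t) = d (WA A (c, W)) + d (WA (- A) (c, W))"
    using assms(1) fin_wallet_WA[OF W] fin_wallet_WA[OF W] by (rule wealth_fun_add)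
  then have "wealthA d UNIV s = wealthA d A s + wealthA d (- A) s"
    unfolding wealthA_def s WA_UNIV_eq_add_Compl[OF W, of c A] .
  then show ?thesis by simp
qed

lemma gain_bdd_above_if_bounded:
  assumes "contract tr S0" and "wealth_fun d" and "bounded d tr S0" and "reachable tr S0 s"
  obtains n where "\<And>Ys. gain d tr A s Ys \<le> int n"
proof -
  obtain s0 where s0: "s0 \<in> S0" and "reachable_from tr s0 s"
    using assms(4) unfolding reachable_def by blast
  then have reach: "reachable_from tr s0 (exec tr s Ys)" for Ys
    using reachable_from_exec by blast
  obtain n where n: "\<And>s'. reachable_from tr s0 s' \<Longrightarrow> wealthA d UNIV s' < n"
    using assms(3) s0 unfolding bounded_def by blast
  have "reachable tr S0 (exec tr s Ys)" for Ys
    using s0 reach unfolding reachable_def by blast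
  then have "wallet_state (snd (exec tr s Ys))" for Ys
    by (rule wallet_state_if_reachable[OF assms(1)])
  then have wealth_lt: "wealthA d A (exec tr s Ys) < n" for Ys
    using wealthA_le_wealthA_UNIV[OF assms(2)] n[OF reach] le_less_trans by blast
  have "gain d tr A s Ys \<le> int n" for Ys
    using wealth_lt[of Ys] unfolding gain_def by linarith
  then show thesis by (rule that)
qed

lemma is_greatest_uG:
  assumes "\<And>Ys. gain d tr A s Ys \<le> b"
  shows "is_greatest (uG_set \<kappa> d tr A s) (uG \<kappa> d tr A s)"
  unfolding uG_def
proof (rule is_greatest_Greatest_if_bdd_above)
  show "gain d tr A s [] \<in> uG_set \<kappa> d tr A s" unfolding uG_set_def by auto
  fix x assume "x \<in> uG_set \<kappa> d tr A s"
  then obtain Ys where "x = gain d tr A s Ys" unfolding uG_set_def by blast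
  with assms show "x \<le> b" by simp
qed

lemma zero_mem_MEV_set:
  assumes "is_greatest (uG_set \<kappa> d tr A s) (uG \<kappa> d tr A s)" and "\<kappa> A {} \<subseteq> \<kappa> A P"
  shows "0 \<in> MEV_set \<kappa> d tr A s P"
proof -
  have "uG \<kappa> d tr A s \<in> uG_set \<kappa> d tr A s"
    using assms(1) unfolding is_greatest_def by (rule conjunct1)
  then obtain Ys where Ys: "set Ys \<subseteq> \<kappa> A {}" "gain d tr A s Ys = uG \<kappa> d tr A s"
    unfolding uG_set_def by auto
  from Ys(2) have "xG \<kappa> d tr A s Ys = 0" unfolding xG_def by simp
  moreover from Ys(1) assms(2) have "set Ys \<subseteq> \<kappa> A P" by (rule order_trans)
  ultimately have "0 = xG \<kappa> d tr A s Ys \<and> set Ys \<subseteq> \<kappa> A P" by simp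
  then show ?thesis unfolding MEV_set_def by blast
qed

lemma is_greatest_MEV:
  assumes "\<And>Ys. gain d tr A s Ys \<le> b" and "0 \<in> MEV_set \<kappa> d tr A s P"
  shows "is_greatest (MEV_set \<kappa> d tr A s P) (MEV \<kappa> d tr A s P)"
  unfolding MEV_def
proof (rule is_greatest_Greatest_if_bdd_above[OF assms(2)])
  fix x assume "x \<in> MEV_set \<kappa> d tr A s P"
  then obtain Ys where "x = xG \<kappa> d tr A s Ys" unfolding MEV_set_def by blast
  with assms(1)[of Ys] show "x \<le> b - uG \<kappa> d tr A s" unfolding xG_def by simp
qed

theorem mainTheorem9:
  fixes tr :: "('c, 'a :: countable, 't, 'x) trans_fun"
    and S0 :: "('c, 'a, 't) bstate set"
    and d :: "('t \<Rightarrow> nat) \<Rightarrow> nat"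
    and \<kappa> :: "'a set \<Rightarrow> 'x set \<Rightarrow> 'x set"
    and A :: "'a set" and P :: "'x set" and s :: "('c, 'a, 't) bstate"
  assumes "infinite (UNIV :: 'a set)"
    and "contract tr S0"
    and "wealth_fun d"
    and "deducibility \<kappa>"
    and "bounded d tr S0"
    and "reachable tr S0 s"
  shows "(\<exists>u. is_greatest (uG_set \<kappa> d tr A s) u)
       \<and> (\<exists>m. is_greatest (MEV_set \<kappa> d tr A s P) m)
       \<and> 0 \<le> MEV \<kappa> d tr A s P"
proof -
  obtain n where gain_le: "\<And>Ys. gain d tr A s Ys \<le> int n"
    using gain_bdd_above_if_bounded[OF assms(2,3,5,6)] by blast
  have uG: "is_greatest (uG_set \<kappa> d tr A s) (uG \<kappa> d tr A s)"
    using gain_le by (rule is_greatest_uG)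
  have "\<kappa> A {} \<subseteq> \<kappa> A P" using assms(4) by (rule deducibility_mono) auto
  with uG have zero: "0 \<in> MEV_set \<kappa> d tr A s P" by (rule zero_mem_MEV_set)
  have MEV: "is_greatest (MEV_set \<kappa> d tr A s P) (MEV \<kappa> d tr A s P)"
    using gain_le zero by (rule is_greatest_MEV)
  with zero have "0 \<le> MEV \<kappa> d tr A s P" unfolding is_greatest_def by blast
  with uG MEV show ?thesis by blast
qed

end
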